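(* Assume the Low-Rank MDP satisfies $\eta$-reachability for some $\eta>0$. Fix $h\in[H-1]$, $C\ge1$, $\varepsilon\le\eta/2$. Let $\Psi=\{\pi_1,\dots,\pi_d\}\subseteq\Pi_{\mathrm{M}}$ be such that $\{\phi^{\star,\pi_i}_h\}_{i\in[d]}$ is a $(C,\varepsilon)$-approximate barycentric spanner for $\mathcal{W}_h=\{\phi^{\star,\pi}_h:\pi\in\Pi_{\mathrm{M}}\}$. Then $\Psi$ is a $(\frac{1}{2dC},0)$-policy cover for layer $h+1$, i.e. $\max_{\pi\in\Psi}d^\pi(x)\ge\frac{1}{2dC}\sup_{\pi'\in\Pi_{\mathrm{M}}}d^{\pi'}(x)$ for every $x\in\mathcal{X}_{h+1}$.
   Context: Setting (Low-Rank MDP). Fix horizon $H\in\mathbb{N}$, dimension $d\in\mathbb{N}$, a finite action set $\mathcal{A}$ with $|\mathcal{A}|=A$, and a measurable state space $\mathcal{X}=\mathcal{X}_1\sqcup\cdots\sqcup\mathcal{X}_H$ (disjoint layers) carrying a $\sigma$-finite measure $\nu$. The MDP $\mathcal{M}$ has an initial distribution $\rho$ on $\mathcal{X}_1$ and, for each $h\in[H-1]$, measurable maps $\phi^\star_h:\mathcal{X}_h\times\mathcal{A}\to\mathbb{R}^d$ and $\mu^\star_{h+1}:\mathcal{X}_{h+1}\to\mathbb{R}^d$ such that for every $(x,a)\in\mathcal{X}_h\times\mathcal{A}$ the function $x'\mapsto\mu^\star_{h+1}(x')^\top\phi^\star_h(x,a)$ is a probability density w.r.t. $\nu$ on $\mathcal{X}_{h+1}$;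 this density is the transition kernel $T_h(\cdot\mid x,a)$. $\Pi_{\mathrm{M}}$ denotes the set of randomized Markov policies $\pi:\mathcal{X}\to\Delta(\mathcal{A})$; an episode under $\pi$ draws $x_1\sim\rho$, $a_h\sim\pi(x_h)$, $x_{h+1}\sim T_h(\cdot\mid x_h,a_h)$, and $\mathbb{P}^\pi,\mathbb{E}^\pi$ denote the law and expectation of the trajectory. For $h\ge2$ and $x\in\mathcal{X}_h$, $d^\pi(x)$ denotes the density w.r.t. $\nu$ of the law of $x_h$ under $\pi$ (so $d^\pi(x)=\mu^\star_h(x)^\top\mathbb{E}^\pi[\phi^\star_{h-1}(x_{h-1},a_{h-1})]$). Normalization: $\|\phi^\star_h(x,a)\|\le 1$ for all $h,x,a$, and $\|\int_{\mathcal{X}_h}\mu^\star_h(x)g(x)\,d\nu(x)\|\le\sqrt d$ for every measurable $g:\mathcal{X}_h\to[0,1]$. Here $\|\cdot\|$ is the Euclidean norm. Notation: $\phi^{\star,\pi}_h:=\mathbb{E}^\pi[\phi^\star_h(x_h,a_h)]$. $\eta$-reachability: for all $h\in\{2,\dots,H\}$ and $x\in\mathcal{X}_h$, $\sup_{\pi\in\Pi_{\mathrm{M}}}d^\pi(x)\ge\eta\|\mu^\star_h(x)\|$. Barycentric spanner: given $\mathcal{W}\subseteq\mathbb{R}^d$ spanning $\mathbb{R}^d$, $\{w_1,\dots,w_d\}\subseteq\mathcal{W}$ is a $(C,\varepsilon)$-approximate barycentric spanner for $\mathcal{W}$ if for every $w\in\mathcal{W}$ there are $\beta_1,\dots,\beta_d\in[-C,C]$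 with $\|w-\sum_i\beta_iw_i\|\le\varepsilon$. *)

theory Defs
  imports "HOL-Probability.Probability"
begin

text \<open>The state space is the space of the
  measure M (carrying the sigma-finite measure nu = M), split into disjoint layers X 1, ..., X H.
  Features phi h x a and mu h x live in real^'d, where d = CARD('d).\<close>

definition markov_policies :: "'x measure \<Rightarrow> ('x \<Rightarrow> 'a::finite pmf) set" where
  "markov_policies M = {\<pi>. \<forall>a. (\<lambda>x. pmf (\<pi> x) a) \<in> borel_measurable M}"

definition transition ::
  "'x measure \<Rightarrow> (nat \<Rightarrow> 'x set) \<Rightarrow> (nat \<Rightarrow> 'x \<Rightarrow> 'a \<Rightarrow> real^'d) \<Rightarrow> (nat \<Rightarrow> 'x \<Rightarrow> real^'d)
    \<Rightarrow> nat \<Rightarrow> 'x \<Rightarrow> 'a \<Rightarrow> 'x measure" where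
  "transition M X \<phi> \<mu> h x a =
     density M (\<lambda>x'. ennreal (indicator (X (Suc h)) x' * (\<mu> (Suc h) x' \<bullet> \<phi> h x a)))"

text \<open>Law of the state x_h under policy pi (h >= 1): x_1 ~ rho, a_h ~ pi(x_h),
  x_{h+1} ~ T_h(. | x_h, a_h). (Layer 0 does not exist; its value is junk.)\<close>
fun state_law ::
  "'x measure \<Rightarrow> 'x measure \<Rightarrow> (nat \<Rightarrow> 'x set) \<Rightarrow> (nat \<Rightarrow> 'x \<Rightarrow> 'a::finite \<Rightarrow> real^'d)
    \<Rightarrow> (nat \<Rightarrow> 'x \<Rightarrow> real^'d) \<Rightarrow> ('x \<Rightarrow> 'a pmf) \<Rightarrow> nat \<Rightarrow> 'x measure" where
  "state_law M \<rho> X \<phi> \<mu> \<pi> 0 = \<rho>"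
| "state_law M \<rho> X \<phi> \<mu> \<pi> (Suc 0) = \<rho>"
| "state_law M \<rho> X \<phi> \<mu> \<pi> (Suc (Suc h)) =
     state_law M \<rho> X \<phi> \<mu> \<pi> (Suc h) \<bind>
       (\<lambda>x. measure_pmf (\<pi> x) \<bind> (\<lambda>a. transition M X \<phi> \<mu> (Suc h) x a))"

definition feature_exp ::
  "'x measure \<Rightarrow> 'x measure \<Rightarrow> (nat \<Rightarrow> 'x set) \<Rightarrow> (nat \<Rightarrow> 'x \<Rightarrow> 'a::finite \<Rightarrow> real^'d)
    \<Rightarrow> (nat \<Rightarrow> 'x \<Rightarrow> real^'d) \<Rightarrow> ('x \<Rightarrow> 'a pmf) \<Rightarrow> nat \<Rightarrow> real^'d" where
  "feature_exp M \<rho> X \<phi> \<mu> \<pi> h =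
     (\<integral>x. (\<integral>a. \<phi> h x a \<partial>measure_pmf (\<pi> x)) \<partial>state_law M \<rho> X \<phi> \<mu> \<pi> h)"

text \<open>d^pi(x) for x in X_h, h >= 2: the (canonical version of the) density of x_h,
  d^pi(x) = mu_h(x)^T E^pi[phi_{h-1}(x_{h-1}, a_{h-1})].\<close>
definition occ ::
  "'x measure \<Rightarrow> 'x measure \<Rightarrow> (nat \<Rightarrow> 'x set) \<Rightarrow> (nat \<Rightarrow> 'x \<Rightarrow> 'a::finite \<Rightarrow> real^'d)
    \<Rightarrow> (nat \<Rightarrow> 'x \<Rightarrow> real^'d) \<Rightarrow> ('x \<Rightarrow> 'a pmf) \<Rightarrow> nat \<Rightarrow> 'x \<Rightarrow> real" where
  "occ M \<rho> X \<phi> \<mu> \<pi> h x = \<mu> h x \<bullet> feature_exp M \<rho> X \<phi> \<mu> \<pi> (h - 1)"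

definition low_rank_mdp ::
  "'x measure \<Rightarrow> nat \<Rightarrow> (nat \<Rightarrow> 'x set) \<Rightarrow> 'x measure \<Rightarrow> (nat \<Rightarrow> 'x \<Rightarrow> 'a::finite \<Rightarrow> real^'d)
    \<Rightarrow> (nat \<Rightarrow> 'x \<Rightarrow> real^'d) \<Rightarrow> bool" where
  "low_rank_mdp M H X \<rho> \<phi> \<mu> \<longleftrightarrow>
     sigma_finite_measure M \<and>
     (\<forall>h\<in>{1..H}. X h \<in> sets M) \<and>
     (\<forall>h\<in>{1..H}. \<forall>h'\<in>{1..H}. h \<noteq> h' \<longrightarrow> X h \<inter> X h' = {}) \<and>
     (\<Union>h\<in>{1..H}. X h) = space M \<and>
     prob_space \<rho> \<and> sets \<rho> = sets M \<and> emeasure \<rho> (X 1) = 1 \<and>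
     (\<forall>h\<in>{1..<H}. \<forall>a. (\<lambda>x. \<phi> h x a) \<in> borel_measurable M) \<and>
     (\<forall>h\<in>{2..H}. \<mu> h \<in> borel_measurable M) \<and>
     (\<forall>h\<in>{1..<H}. \<forall>x\<in>X h. \<forall>a.
        (\<forall>x'\<in>X (Suc h). 0 \<le> \<mu> (Suc h) x' \<bullet> \<phi> h x a) \<and>
        (\<integral>\<^sup>+x'\<in>X (Suc h). ennreal (\<mu> (Suc h) x' \<bullet> \<phi> h x a) \<partial>M) = 1) \<and>
     (\<forall>h\<in>{1..<H}. \<forall>x\<in>X h. \<forall>a. norm (\<phi> h x a) \<le> 1) \<and>
     (\<forall>h\<in>{2..H}. \<forall>g \<in> borel_measurable M. (\<forall>x\<in>X h. 0 \<le> g x \<and> g x \<le> 1) \<longrightarrow>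
        integrable M (\<lambda>x. (indicator (X h) x * g x) *\<^sub>R \<mu> h x) \<and>
        norm (\<integral>x. (indicator (X h) x * g x) *\<^sub>R \<mu> h x \<partial>M) \<le> sqrt (real CARD('d)))"

definition reachable ::
  "'x measure \<Rightarrow> nat \<Rightarrow> (nat \<Rightarrow> 'x set) \<Rightarrow> 'x measure \<Rightarrow> (nat \<Rightarrow> 'x \<Rightarrow> 'a::finite \<Rightarrow> real^'d)
    \<Rightarrow> (nat \<Rightarrow> 'x \<Rightarrow> real^'d) \<Rightarrow> real \<Rightarrow> bool" where
  "reachable M H X \<rho> \<phi> \<mu> \<eta> \<longleftrightarrow>
     (\<forall>h\<in>{2..H}. \<forall>x\<in>X h.
        (SUP \<pi>\<in>(markov_policies M :: ('x \<Rightarrow> 'a pmf) set). occ M \<rho> X \<phi> \<mu> \<pi> h x) \<ge> \<eta> * norm (\<mu> h x))"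

definition approx_bary_spanner :: "real \<Rightarrow> real \<Rightarrow> (real^'d) set \<Rightarrow> ('d \<Rightarrow> real^'d) \<Rightarrow> bool" where
  "approx_bary_spanner C \<epsilon> W w \<longleftrightarrow>
     span W = UNIV \<and> range w \<subseteq> W \<and>
     (\<forall>v\<in>W. \<exists>\<beta>. (\<forall>i. \<bar>\<beta> i\<bar> \<le> C) \<and> norm (v - (\<Sum>i\<in>UNIV. \<beta> i *\<^sub>R w i)) \<le> \<epsilon>)"

end

theory Submission imports Defs begin

text \<open>Fix x in layer h+1 and put c = \<mu>_{h+1}(x), so that d^\<pi>(x) = c \<bullet> \<phi>^{\<star>,\<pi>}_h.
  Each \<phi>^{\<star>,\<pi>}_h is within \<epsilon> of a combination of the spanner vectors with coefficients
  bounded by C, and c \<bullet> \<phi>^{\<star>,\<pi>_i}_h = d^{\<pi>_i}(x) \<ge> 0 because densities are nonnegative;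
  hence sup_\<pi> d^\<pi>(x) \<le> d C max_i d^{\<pi>_i}(x) + \<epsilon> |c|. Reachability gives \<eta> |c| \<le> sup_\<pi> d^\<pi>(x),
  so for \<epsilon> \<le> \<eta>/2 the error term is at most half of the supremum and can be absorbed.\<close>

lemma emeasure_density_eq_0:
  assumes "\<forall>x\<in>B. f x = 0"
  shows "emeasure (density M f) B = 0"
proof -
  have "(\<lambda>x. f x * indicator B x) = (\<lambda>_. 0)"
    using assms by (auto simp: indicator_def fun_eq_iff)
  then show ?thesis
    unfolding density_def by (simp add: emeasure_measure_of_conv)
qed

text \<open>Unlike \<open>AE_bind\<close>, this needs no measurability of the kernel \<open>f\<close>.\<close>

lemma emeasure_bind_eq_0:
  assumes null: "\<And>x. x \<in> space N \<Longrightarrow> emeasure (f x) B = 0"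
    and sets_f: "\<And>x. x \<in> space N \<Longrightarrow> sets (f x) = sets K" and B: "B \<in> sets K"
  shows "emeasure (N \<bind> f) B = 0"
proof (cases "space N = {}")
  case True
  then show ?thesis
    by (cases "B = {}") (auto simp: bind_empty emeasure_notin_sets)
next
  case False
  define K' where "K' = f (SOME x. x \<in> space N)"
  define D where "D = distr N (subprob_algebra K') f"
  have sets_D: "sets D = sets (subprob_algebra K')"
    unfolding D_def by simp
  have B': "B \<in> sets K'"
    unfolding K'_def using False sets_f B by (simp add: some_in_eq)
  define E where "E = {L \<in> space (subprob_algebra K'). emeasure L B \<noteq> 0}"
  have E: "E \<in> sets (subprob_algebra K')"
    unfolding E_def using measurable_emeasure_subprob_algebra[OF B'] by measurable
  have "f -` E \<inter> space N = {}"
    using null by (auto simp: E_def)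
  then have "emeasure D E = 0"
    unfolding D_def distr_def by (simp add: emeasure_measure_of_conv)
  with E sets_D have "E \<in> null_sets D"
    by (simp add: null_sets_def)
  moreover have "space D = space (subprob_algebra K')"
    using sets_D by (rule sets_eq_imp_space_eq)
  ultimately have "AE L in D. emeasure L B = 0"
    by (intro AE_I'[of E]) (auto simp: E_def)
  moreover have "(\<lambda>L. emeasure L B) \<in> borel_measurable D"
    using measurable_emeasure_subprob_algebra[OF B'] by (simp add: measurable_cong_sets[OF sets_D refl])
  ultimately have "(\<integral>\<^sup>+L. emeasure L B \<partial>D) = 0"
    by (simp add: nn_integral_0_iff_AE)
  moreover have "N \<bind> f = join D"
    unfolding D_def K'_def using False by (simp add: bind_nonempty)
  ultimately show ?thesis
    by (simp add: emeasure_join[OF sets_D B'])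
qed

lemma sets_bind_eq:
  assumes "sets N = sets K" and "\<And>x. x \<in> space N \<Longrightarrow> sets (f x) = sets K"
  shows "sets (N \<bind> f) = sets K"
proof (cases "space N = {}")
  case True
  then have "space K = {}"
    using sets_eq_imp_space_eq[OF assms(1)] by simp
  then have "sets K = {{}}"
    using sets.sets_into_space[of _ K] sets.empty_sets[of K] by auto
  with True show ?thesis
    by (simp add: bind_empty)
qed (use assms in \<open>simp add: sets_bind\<close>)

lemma sets_transition_step:
  "sets (measure_pmf p \<bind> transition M X \<phi> \<mu> h x) = sets M"
  by (subst sets_bind[where N=M]) (auto simp: transition_def)

lemma sets_state_law:
  assumes "sets \<rho> = sets M"
  shows "sets (state_law M \<rho> X \<phi> \<mu> \<pi> k) = sets M"
  using assms
  by (induction M \<rho> X \<phi> \<mu> \<pi> k rule: state_law.induct)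
     (auto intro!: sets_bind_eq sets_transition_step)

lemma AE_state_law_in_layer:
  assumes mdp: "low_rank_mdp M H X \<rho> \<phi> \<mu>" and k: "k \<in> {1..H}"
  shows "AE y in state_law M \<rho> X \<phi> \<mu> \<pi> k. y \<in> X k"
proof -
  have sets_\<rho>: "sets \<rho> = sets M" and "prob_space \<rho>" and \<rho>_X1: "emeasure \<rho> (X 1) = 1"
    and X_k: "X k \<in> sets M"
    using mdp k unfolding low_rank_mdp_def by auto
  let ?L = "state_law M \<rho> X \<phi> \<mu> \<pi> k"
  have sets_L: "sets ?L = sets M"
    using sets_\<rho> by (rule sets_state_law)
  have outside: "space M - X k \<in> sets M"
    using X_k by auto
  from k consider "k = 1" | h where "k = Suc (Suc h)"
    by (metis One_nat_def atLeastAtMost_iff not0_implies_Suc not_one_le_zero)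
  then have "emeasure ?L (space M - X k) = 0"
  proof cases
    case 1
    have "emeasure \<rho> (space \<rho> - X 1) = emeasure \<rho> (space \<rho>) - emeasure \<rho> (X 1)"
      using X_k sets_\<rho> 1 \<rho>_X1 by (intro emeasure_compl) auto
    also have "\<dots> = 0"
      using prob_space.emeasure_space_1[OF \<open>prob_space \<rho>\<close>] \<rho>_X1 by simp
    finally show ?thesis
      using 1 sets_eq_imp_space_eq[OF sets_\<rho>] by simp
  next
    case (2 h)
    show ?thesis
      unfolding 2 state_law.simps
      using outside 2 sets_transition_step
      by (intro emeasure_bind_eq_0[where K=M])
         (auto simp: transition_def intro!: emeasure_bind_eq_0[where K=M] emeasure_density_eq_0)
  qed
  with outside sets_L have "space M - X k \<in> null_sets ?L"
    by (simp add: null_sets_def)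
  then show ?thesis
    by (rule AE_I') (auto simp: sets_eq_imp_space_eq[OF sets_L])
qed

lemma occ_nonneg:
  assumes mdp: "low_rank_mdp M H X \<rho> \<phi> \<mu>" and h: "h \<in> {1..<H}" and x: "x \<in> X (Suc h)"
  shows "0 \<le> occ M \<rho> X \<phi> \<mu> \<pi> (Suc h) x"
proof -
  let ?L = "state_law M \<rho> X \<phi> \<mu> \<pi> h"
  let ?v = "\<lambda>y. \<integral>a. \<phi> h y a \<partial>measure_pmf (\<pi> y)"
  let ?c = "\<mu> (Suc h) x"
  have density_nonneg: "\<forall>y\<in>X h. \<forall>a. 0 \<le> ?c \<bullet> \<phi> h y a"
    using mdp h x unfolding low_rank_mdp_def by auto
  have "0 \<le> ?c \<bullet> ?v y" if "y \<in> X h" for y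
  proof -
    have "?c \<bullet> ?v y = (\<integral>a. ?c \<bullet> \<phi> h y a \<partial>measure_pmf (\<pi> y))"
      by (subst integral_inner_right) (auto intro: integrable_measure_pmf_finite)
    also have "\<dots> \<ge> 0"
      using density_nonneg that by (intro integral_nonneg_AE AE_I2) auto
    finally show ?thesis .
  qed
  moreover have "AE y in ?L. y \<in> X h"
    using AE_state_law_in_layer[OF mdp] h by auto
  ultimately have "AE y in ?L. 0 \<le> ?c \<bullet> ?v y"
    by (auto elim: AE_mp)
  show ?thesis
  proof (cases "integrable ?L ?v")
    case True
    then have "occ M \<rho> X \<phi> \<mu> \<pi> (Suc h) x = (\<integral>y. ?c \<bullet> ?v y \<partial>?L)"
      unfolding occ_def feature_exp_def by simp
    with \<open>AE y in ?L. 0 \<le> ?c \<bullet> ?v y\<close> show ?thesis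
      by (simp add: integral_nonneg_AE)
  qed (simp add: occ_def feature_exp_def not_integrable_integral_eq)
qed

lemma inner_le_approx_combination:
  fixes c v :: "'v::real_inner" and w :: "'i::finite \<Rightarrow> 'v" and \<beta> :: "'i \<Rightarrow> real"
  assumes \<beta>: "\<forall>i. \<bar>\<beta> i\<bar> \<le> C" and approx: "norm (v - (\<Sum>i\<in>UNIV. \<beta> i *\<^sub>R w i)) \<le> \<epsilon>"
    and nonneg: "\<forall>i. 0 \<le> c \<bullet> w i" and bounded: "\<forall>i. c \<bullet> w i \<le> m"
  shows "c \<bullet> v \<le> real CARD('i) * C * m + \<epsilon> * norm c"
proof -
  let ?r = "v - (\<Sum>i\<in>UNIV. \<beta> i *\<^sub>R w i)"
  have "c \<bullet> v = (\<Sum>i\<in>UNIV. \<beta> i * (c \<bullet> w i)) + c \<bullet> ?r"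
    by (simp add: inner_diff_right inner_sum_right)
  also have "(\<Sum>i\<in>UNIV. \<beta> i * (c \<bullet> w i)) \<le> (\<Sum>i\<in>(UNIV::'i set). C * m)"
  proof (rule sum_mono)
    fix i
    have "\<beta> i * (c \<bullet> w i) \<le> \<bar>\<beta> i\<bar> * (c \<bullet> w i)"
      using nonneg by (simp add: mult_right_mono)
    also have "\<dots> \<le> C * m"
      using \<beta> nonneg bounded by (intro mult_mono) auto
    finally show "\<beta> i * (c \<bullet> w i) \<le> C * m" .
  qed
  also have "c \<bullet> ?r \<le> norm c * \<epsilon>"
    using norm_cauchy_schwarz[of c ?r] mult_left_mono[OF approx norm_ge_zero[of c]] by linarith
  finally show ?thesis
    by (simp add: mult.commute mult.left_commute)
qed

theorem mainTheorem3:
  fixes M \<rho> :: "'x measure" and H h :: nat and X :: "nat \<Rightarrow> 'x set"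
    and \<phi> :: "nat \<Rightarrow> 'x \<Rightarrow> 'a::finite \<Rightarrow> real^'d" and \<mu> :: "nat \<Rightarrow> 'x \<Rightarrow> real^'d"
    and \<eta> C \<epsilon> :: real and \<Psi> :: "'d \<Rightarrow> ('x \<Rightarrow> 'a pmf)"
  assumes mdp: "low_rank_mdp M H X \<rho> \<phi> \<mu>"
    and eta: "\<eta> > 0" and reach: "reachable M H X \<rho> \<phi> \<mu> \<eta>"
    and h: "h \<in> {1..<H}" and C: "C \<ge> 1" and eps: "\<epsilon> \<le> \<eta> / 2"
    and Psi: "\<forall>i. \<Psi> i \<in> markov_policies M"
    and span: "approx_bary_spanner C \<epsilon>
                 ((\<lambda>\<pi>. feature_exp M \<rho> X \<phi> \<mu> \<pi> h) ` markov_policies M)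
                 (\<lambda>i. feature_exp M \<rho> X \<phi> \<mu> (\<Psi> i) h)"
  shows "\<forall>x\<in>X (Suc h).
           (MAX i. occ M \<rho> X \<phi> \<mu> (\<Psi> i) (Suc h) x)
             \<ge> 1 / (2 * real CARD('d) * C) *
               (SUP \<pi>\<in>markov_policies M. occ M \<rho> X \<phi> \<mu> \<pi> (Suc h) x)"
proof
  fix x assume x: "x \<in> X (Suc h)"
  let ?occ = "\<lambda>\<pi>. occ M \<rho> X \<phi> \<mu> \<pi> (Suc h) x" and ?c = "\<mu> (Suc h) x"
  define m where "m = (MAX i. ?occ (\<Psi> i))"
  define S where "S = (SUP \<pi>\<in>markov_policies M. ?occ \<pi>)"
  have "?occ \<pi> \<le> real CARD('d) * C * m + \<epsilon> * norm ?c" if \<pi>: "\<pi> \<in> markov_policies M" for \<pi>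
  proof -
    from span have "\<forall>v\<in>(\<lambda>\<pi>. feature_exp M \<rho> X \<phi> \<mu> \<pi> h) ` markov_policies M.
        \<exists>\<beta>. (\<forall>i. \<bar>\<beta> i\<bar> \<le> C)
          \<and> norm (v - (\<Sum>i\<in>UNIV. \<beta> i *\<^sub>R feature_exp M \<rho> X \<phi> \<mu> (\<Psi> i) h)) \<le> \<epsilon>"
      unfolding approx_bary_spanner_def by (rule conjunct2[THEN conjunct2])
    then obtain \<beta> where "\<forall>i. \<bar>\<beta> i\<bar> \<le> C" and "norm (feature_exp M \<rho> X \<phi> \<mu> \<pi> h
        - (\<Sum>i\<in>UNIV. \<beta> i *\<^sub>R feature_exp M \<rho> X \<phi> \<mu> (\<Psi> i) h)) \<le> \<epsilon>"
      using \<pi> by blast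
    moreover have "\<forall>i. 0 \<le> ?c \<bullet> feature_exp M \<rho> X \<phi> \<mu> (\<Psi> i) h"
      and "\<forall>i. ?c \<bullet> feature_exp M \<rho> X \<phi> \<mu> (\<Psi> i) h \<le> m"
      using occ_nonneg[OF mdp h x] by (simp_all add: m_def occ_def)
    ultimately show ?thesis
      unfolding occ_def diff_Suc_1 by (rule inner_le_approx_combination)
  qed
  then have "S \<le> real CARD('d) * C * m + \<epsilon> * norm ?c"
    unfolding S_def using Psi by (intro cSUP_least) auto
  moreover have "\<eta> * norm ?c \<le> S"
  proof -
    have "Suc h \<in> {2..H}"
      using h by auto
    then show ?thesis
      using reach x unfolding reachable_def S_def by blast
  qed
  moreover have "\<epsilon> * norm ?c \<le> \<eta> * norm ?c / 2"
    using mult_right_mono[OF eps norm_ge_zero] by simp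
  ultimately have "S \<le> m * (2 * real CARD('d) * C)"
    by (simp add: field_simps)
  then show "1 / (2 * real CARD('d) * C) * S \<le> m"
    using C by (simp add: pos_divide_le_eq)
qed

end
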